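(* Let $\xi=(\xi_0\xi_1\ldots\xi_{m-1})^{\mathbb Z}\in\Sigma_2\setminus\{0^{\mathbb Z}\}$ be a periodic sequence such that the map $g=f_{[\xi_0\ldots\xi_{m-1}]}$ has a repelling fixed point $q$. Then $I_{[\xi]}$ is a non-trivial interval, and it contains points $p_\infty<q<\widetilde p_\infty$ which are fixed points of $g^2$.
   Context: Let $f_0,f_1\colon[0,1]\to[0,1]$ be $C^1$ injective maps such that: (F0.i) $f_0$ is increasing and has exactly two fixed points $0$ and $1$, both hyperbolic, with $f_0'(0)=\beta>1$, $f_0'(1)=\lambda\in(0,1)$ and $\lambda\le f_0'(x)\le\beta$ for all $x\in[0,1]$; (F0.ii) there are intervals $I_0=[a_0,b_0]\subset(0,1)$ with $b_0=f_0(a_0)$ and $I_1=[a_1,b_1]$ with $b_1=f_0(a_1)$, and numbers $\alpha>1$, $N\ge1$, with $f_0^N(I_0)=I_1$ and $\lambda\,(f_0^N)'(x)>\alpha$ for all $x\in I_0$; moreover $f_0$ is expanding on $[0,b_0]$ and contracting on $[a_1,1]$; (F1.i) $f_1$ is decreasing with $\gamma'=\min_{[0,1]}|f_1'|\le\gamma=\max_{[0,1]}|f_1'|<1$; (F1.ii) $|f_1'(x)|\ge\bar\alpha>1/\alpha$ for all $x\in[f_1^2(a_1),a_1]$; (F01) $f_1(1)=0$, $f_1([a_1,1])\subset[0,a_0)$, and $[0,f_0^{-2}(b_0))\subset f_1([0,1])$. For a finite word, $f_{[\xi_0\ldots\xi_n]}=f_{\xi_n}\circ\cdots\circ f_{\xi_0}$.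 $\Sigma_2=\{0,1\}^{\mathbb Z}$; $(\xi_0\ldots\xi_{m-1})^{\mathbb Z}$ is the periodic sequence with $\xi_{i+m}=\xi_i$ for all $i$. For $\xi\in\Sigma_2$ the admissible domain is $I_{[\xi]}=\bigcap_{k\ge1}f_{\xi_{-1}}\circ\cdots\circ f_{\xi_{-k}}([0,1])$ (a point or a non-trivial compact interval). *)

theory Defs
  imports "HOL-Analysis.Analysis"
begin

definition fmap :: "(real \<Rightarrow> real) \<Rightarrow> (real \<Rightarrow> real) \<Rightarrow> nat \<Rightarrow> real \<Rightarrow> real" where
  "fmap f0 f1 i = (if i = 0 then f0 else f1)"

text \<open>f_[w0 ... wn] = f_wn o ... o f_w0 (w0 is applied first).\<close>
definition word_map :: "(real \<Rightarrow> real) \<Rightarrow> (real \<Rightarrow> real) \<Rightarrow> nat list \<Rightarrow> real \<Rightarrow> real" where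
  "word_map f0 f1 w = fold (fmap f0 f1) w"

definition periodic_seq :: "nat list \<Rightarrow> int \<Rightarrow> nat" where
  "periodic_seq xs = (\<lambda>i. xs ! nat (i mod int (length xs)))"

text \<open>back_comp f0 f1 xi k = f_{xi_{-1}} o ... o f_{xi_{-k}}.\<close>
fun back_comp :: "(real \<Rightarrow> real) \<Rightarrow> (real \<Rightarrow> real) \<Rightarrow> (int \<Rightarrow> nat) \<Rightarrow> nat \<Rightarrow> real \<Rightarrow> real" where
  "back_comp f0 f1 xi 0 = id"
| "back_comp f0 f1 xi (Suc k) = back_comp f0 f1 xi k \<circ> fmap f0 f1 (xi (- (int k + 1)))"

definition admissible_domain :: "(real \<Rightarrow> real) \<Rightarrow> (real \<Rightarrow> real) \<Rightarrow> (int \<Rightarrow> nat) \<Rightarrow> real set" where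
  "admissible_domain f0 f1 xi = (\<Inter>k\<in>{1..}. back_comp f0 f1 xi k ` {0..1})"

end

theory Submission imports Defs begin

text \<open>Reading the symbols of \<open>\<xi>\<close> backwards one period at a time, \<open>I[\<xi>]\<close> is the
  intersection of the nested images \<open>g\<^sup>j[0,1]\<close> of the continuous injective self-map \<open>g\<close> of
  \<open>[0,1]\<close>; so it is a compact interval which \<open>g\<close> maps onto itself. Because the word contains
  the symbol 1, \<open>g\<close> moves both endpoints of \<open>[0,1]\<close>, so \<open>q\<close> is interior, and since \<open>q\<close> is
  repelling a small interval around \<open>q\<close> lies in its own image, hence in every \<open>g\<^sup>j[0,1]\<close>.
  Finally a continuous injection of an interval onto itself fixes or swaps the endpoints, so
  the endpoints of \<open>I[\<xi>]\<close> are fixed points of \<open>g\<^sup>2\<close> on either side of \<open>q\<close>.\<close>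

lemma word_map_Nil [simp]: "word_map f0 f1 [] = id"
  by (simp add: word_map_def)

lemma word_map_Cons: "word_map f0 f1 (i # w) = word_map f0 f1 w \<circ> fmap f0 f1 i"
  by (simp add: word_map_def)

lemma word_map_append: "word_map f0 f1 (u @ v) = word_map f0 f1 v \<circ> word_map f0 f1 u"
  by (simp add: word_map_def)

lemma word_map_closed:
  assumes "f0 ` T \<subseteq> T" "f1 ` T \<subseteq> T" "t \<in> T"
  shows "word_map f0 f1 w t \<in> T"
  using assms(3) by (induction w arbitrary: t) (use assms(1,2) in \<open>auto simp: word_map_Cons fmap_def\<close>)

lemma word_map_self_map:
  assumes "continuous_on S f0" "f0 ` S \<subseteq> S" "inj_on f0 S"
    and "continuous_on S f1" "f1 ` S \<subseteq> S" "inj_on f1 S"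
  shows "continuous_on S (word_map f0 f1 w) \<and> word_map f0 f1 w ` S \<subseteq> S
    \<and> inj_on (word_map f0 f1 w) S"
proof (induction w)
  case Nil
  then show ?case by simp
next
  case (Cons i w)
  have fi: "continuous_on S (fmap f0 f1 i)" "fmap f0 f1 i ` S \<subseteq> S" "inj_on (fmap f0 f1 i) S"
    using assms by (simp_all add: fmap_def)
  have "continuous_on S (word_map f0 f1 w \<circ> fmap f0 f1 i)"
    using fi Cons.IH by (meson continuous_on_compose continuous_on_subset)
  moreover have "(word_map f0 f1 w \<circ> fmap f0 f1 i) ` S \<subseteq> S"
    using fi Cons.IH by (auto simp: image_subset_iff)
  moreover have "inj_on (word_map f0 f1 w \<circ> fmap f0 f1 i) S"
    using fi Cons.IH by (meson comp_inj_on inj_on_subset)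
  ultimately show ?case by (simp only: word_map_Cons)
qed

lemma back_comp_eq_word_map:
  "back_comp f0 f1 xi k = word_map f0 f1 (rev (map (\<lambda>i. xi (- (int i + 1))) [0..<k]))"
  by (induction k) (auto simp: word_map_def)

lemma back_comp_add:
  "back_comp f0 f1 xi (n + k) = back_comp f0 f1 xi n \<circ> back_comp f0 f1 (\<lambda>i. xi (i - int n)) k"
proof (induction k)
  case (Suc k)
  have shift: "- int n - int k - 1 = - int k - 1 - int n" by simp
  show ?case using Suc by (simp add: shift comp_assoc)
qed simp

lemma periodic_seq_shift: "(\<lambda>i. periodic_seq xs (i - int (length xs))) = periodic_seq xs"
  by (auto simp: periodic_seq_def mod_diff_right_eq[symmetric])

lemma back_comp_period:
  assumes "xs \<noteq> []"
  shows "back_comp f0 f1 (periodic_seq xs) (length xs) = word_map f0 f1 xs"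
proof -
  have "rev (map (\<lambda>i. periodic_seq xs (- (int i + 1))) [0..<length xs]) = xs"
  proof (rule nth_equalityI)
    fix j assume "j < length (rev (map (\<lambda>i. periodic_seq xs (- (int i + 1))) [0..<length xs]))"
    then have j: "j < length xs" by simp
    then have "(- int (length xs - Suc j) - 1) mod int (length xs) = int j"
      by (simp add: of_nat_diff mod_diff_right_eq[symmetric])
    then show "rev (map (\<lambda>i. periodic_seq xs (- (int i + 1))) [0..<length xs]) ! j = xs ! j"
      using j by (simp add: rev_nth periodic_seq_def)
  qed simp
  then show ?thesis by (simp add: back_comp_eq_word_map)
qed

lemma back_comp_periodic_seq_pow:
  assumes "xs \<noteq> []"
  shows "back_comp f0 f1 (periodic_seq xs) (length xs * j) = word_map f0 f1 xs ^^ j"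
proof (induction j)
  case (Suc j)
  have "length xs * Suc j = length xs + length xs * j" by simp
  then show ?case
    using Suc back_comp_add[of f0 f1 "periodic_seq xs" "length xs" "length xs * j"]
    by (simp add: periodic_seq_shift back_comp_period[OF assms])
qed simp

lemma funpow_image_antimono:
  assumes "g ` S \<subseteq> S" "i \<le> j"
  shows "(g ^^ j) ` S \<subseteq> (g ^^ i) ` S"
proof -
  have "(g ^^ k) ` S \<subseteq> S" for k
    by (induction k) (use assms(1) in \<open>auto simp: image_subset_iff\<close>)
  then have "(g ^^ i) ` ((g ^^ (j - i)) ` S) \<subseteq> (g ^^ i) ` S"
    by (rule image_mono)
  moreover have "g ^^ j = g ^^ i \<circ> g ^^ (j - i)"
    using assms(2) by (metis funpow_add le_add_diff_inverse)
  ultimately show ?thesis by (simp add: image_comp)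
qed

lemma image_Inter_funpow_image:
  assumes "g ` S \<subseteq> S" "inj_on g S"
  shows "g ` (\<Inter>j. (g ^^ j) ` S) = (\<Inter>j. (g ^^ j) ` S)"
proof
  show "g ` (\<Inter>j. (g ^^ j) ` S) \<subseteq> (\<Inter>j. (g ^^ j) ` S)"
  proof (intro subsetI INT_I)
    fix y j assume "y \<in> g ` (\<Inter>j. (g ^^ j) ` S)"
    then obtain x where x: "x \<in> (\<Inter>k. (g ^^ k) ` S)" "y = g x" by blast
    show "y \<in> (g ^^ j) ` S"
    proof (cases j)
      case 0
      have "x \<in> (g ^^ 0) ` S" using x(1) by blast
      then show ?thesis using 0 x(2) assms(1) by auto
    next
      case (Suc k)
      then show ?thesis using x by (auto simp: image_comp)
    qed
  qed
  show "(\<Inter>j. (g ^^ j) ` S) \<subseteq> g ` (\<Inter>j. (g ^^ j) ` S)"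
  proof
    fix y assume "y \<in> (\<Inter>j. (g ^^ j) ` S)"
    then have "y \<in> (g ^^ Suc j) ` S" for j by blast
    then have y: "y \<in> g ` ((g ^^ j) ` S)" for j by (simp add: image_comp)
    obtain x where x: "x \<in> S" "y = g x" using y[of 0] by auto
    have "x \<in> (g ^^ j) ` S" for j
    proof -
      obtain x' where x': "x' \<in> (g ^^ j) ` S" "y = g x'" using y[of j] by blast
      have "x' \<in> S" using x'(1) funpow_image_antimono[OF assms(1) le0, of j] by auto
      with x x' assms(2) have "x' = x" by (auto dest: inj_onD)
      with x' show ?thesis by simp
    qed
    with x show "y \<in> g ` (\<Inter>j. (g ^^ j) ` S)" by blast
  qed
qed

lemma Inter_funpow_image_interval:
  fixes g :: "real \<Rightarrow> real"
  assumes "continuous_on {c..d} g" "g ` {c..d} \<subseteq> {c..d}"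
  shows "\<exists>a b. (\<Inter>j. (g ^^ j) ` {c..d}) = {a..b}"
proof -
  have cont: "continuous_on {c..d} (g ^^ j)" for j
  proof (induction j)
    case (Suc j)
    have "continuous_on ((g ^^ j) ` {c..d}) g"
      using assms(1) funpow_image_antimono[OF assms(2) le0, of j] by (auto intro: continuous_on_subset)
    then show ?case
      using continuous_on_compose[OF Suc] by simp
  qed (simp add: continuous_on_id)
  let ?F = "range (\<lambda>j. (g ^^ j) ` {c..d})"
  have cc: "compact T \<and> connected T" if T: "T \<in> ?F" for T
  proof -
    obtain j where "T = (g ^^ j) ` {c..d}" using T by blast
    then show ?thesis
      using compact_continuous_image[OF cont compact_Icc] connected_continuous_image[OF cont connected_Icc]
      by simp
  qed
  have "connected (\<Inter>?F)"
  proof (rule connected_chain_gen)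
    show "{c..d} \<in> ?F" using rangeI[of "\<lambda>j. (g ^^ j) ` {c..d}" 0] by simp
    show "closed T \<and> connected T" if "T \<in> ?F" for T
      using cc[OF that] compact_imp_closed by blast
    show "S \<subseteq> T \<or> T \<subseteq> S" if ST: "S \<in> ?F \<and> T \<in> ?F" for S T
    proof -
      obtain i j where "S = (g ^^ i) ` {c..d}" "T = (g ^^ j) ` {c..d}" using ST by blast
      then show ?thesis
        using funpow_image_antimono[OF assms(2), of i j] funpow_image_antimono[OF assms(2), of j i]
        by (cases "i \<le> j") simp_all
    qed
  qed simp
  moreover have "compact (\<Inter>?F)" using cc by (intro compact_Inter) auto
  ultimately show ?thesis using connected_compact_interval_1 by blast
qed

lemma subset_Inter_funpow_image:
  assumes "K \<subseteq> S" "K \<subseteq> g ` K"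
  shows "K \<subseteq> (\<Inter>j. (g ^^ j) ` S)"
proof -
  have "K \<subseteq> (g ^^ j) ` K" for j
  proof (induction j)
    case (Suc j)
    have "K \<subseteq> g ` ((g ^^ j) ` K)" using assms(2) Suc by blast
    then show ?case by (simp add: image_comp)
  qed simp
  then show ?thesis using assms(1) by blast
qed

lemma repelling_fixed_point_expanding_interval:
  fixes g :: "real \<Rightarrow> real"
  assumes cont: "continuous_on {c..d} g" and q: "c < q" "q < d" "g q = q"
    and deriv: "(g has_real_derivative D) (at q within {c..d})" and repelling: "\<bar>D\<bar> > 1"
  obtains \<delta> where "\<delta> > 0" "{q-\<delta>..q+\<delta>} \<subseteq> {c..d}" "{q-\<delta>..q+\<delta>} \<subseteq> g ` {q-\<delta>..q+\<delta>}"
proof -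
  define s where "s = sgn D"
  have s: "1 < s * D" "s = 1 \<or> s = -1"
    using repelling by (auto simp: s_def sgn_if)
  have "((\<lambda>y. s * ((g y - g q) / (y - q))) \<longlongrightarrow> s * D) (at q within {c..d})"
    using deriv by (intro tendsto_mult_left) (simp add: has_field_derivative_iff)
  then have "eventually (\<lambda>y. 1 < s * ((g y - q) / (y - q))) (at q within {c..d})"
    using s(1) q(3) by (auto dest: order_tendstoD(1))
  then obtain e where e: "e > 0"
    "\<And>y. y \<in> {c..d} \<Longrightarrow> y \<noteq> q \<Longrightarrow> dist y q < e \<Longrightarrow> 1 < s * ((g y - q) / (y - q))"
    unfolding eventually_at by auto
  define \<delta> where "\<delta> = min (e/2) (min (q - c) (d - q))"
  have \<delta>: "\<delta> > 0" "c \<le> q - \<delta>" "q + \<delta> \<le> d" "\<delta> < e"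
    using e(1) q by (auto simp: \<delta>_def)
  have "1 < s * ((g (q - \<delta>) - q) / (- \<delta>))" "1 < s * ((g (q + \<delta>) - q) / \<delta>)"
    using e(2)[of "q - \<delta>"] e(2)[of "q + \<delta>"] \<delta> by (auto simp: dist_real_def)
  then have left: "s * (g (q - \<delta>) - q) < - \<delta>" and right: "\<delta> < s * (g (q + \<delta>) - q)"
    using \<delta>(1) by (simp_all add: field_simps)
  let ?K = "{q-\<delta>..q+\<delta>}"
  have "connected (g ` ?K)"
    using cont \<delta> by (intro connected_continuous_image) (auto intro: continuous_on_subset)
  moreover have "g (q-\<delta>) \<in> g ` ?K" "g (q+\<delta>) \<in> g ` ?K"
    using \<delta>(1) by auto
  ultimately have "{g (q-\<delta>)..g (q+\<delta>)} \<subseteq> g ` ?K" "{g (q+\<delta>)..g (q-\<delta>)} \<subseteq> g ` ?K"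
    by (simp_all add: connected_contains_Icc)
  moreover have "?K \<subseteq> {g (q-\<delta>)..g (q+\<delta>)} \<or> ?K \<subseteq> {g (q+\<delta>)..g (q-\<delta>)}"
    using s(2) left right by auto
  ultimately have "?K \<subseteq> g ` ?K" by blast
  then show ?thesis using that \<delta> by auto
qed

lemma continuous_inj_onto_interval_endpoints_period_two:
  fixes g :: "real \<Rightarrow> real"
  assumes ab: "a < b" and cont: "continuous_on {a..b} g" and inj: "inj_on g {a..b}"
    and onto: "g ` {a..b} = {a..b}"
  shows "g (g a) = a" "g (g b) = b"
proof -
  have interior: "g x \<noteq> a \<and> g x \<noteq> b" if "a < x" "x < b" for x
  proof -
    have "a \<le> g a" "g a \<le> b" "a \<le> g b" "g b \<le> b" using onto ab by auto
    then show ?thesis using continuous_inj_imp_mono[OF that cont inj] by auto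
  qed
  have "a \<in> g ` {a..b}" "b \<in> g ` {a..b}" using onto ab by auto
  then obtain x y where x: "x \<in> {a..b}" "g x = a" and y: "y \<in> {a..b}" "g y = b" by blast
  have "x = a \<or> x = b" "y = a \<or> y = b" "x \<noteq> y"
    using interior x y ab by force+
  then show "g (g a) = a" "g (g b) = b" using x y by auto
qed

lemma Inter_funpow_image_repelling_fixed_point:
  fixes g :: "real \<Rightarrow> real"
  assumes cont: "continuous_on {c..d} g" and self: "g ` {c..d} \<subseteq> {c..d}"
    and inj: "inj_on g {c..d}" and q: "c < q" "q < d" "g q = q"
    and deriv: "(g has_real_derivative D) (at q within {c..d})" and repelling: "\<bar>D\<bar> > 1"
  obtains a b where "(\<Inter>j. (g ^^ j) ` {c..d}) = {a..b}" "a < q" "q < b"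
    "g (g a) = a" "g (g b) = b"
proof -
  let ?J = "\<Inter>j. (g ^^ j) ` {c..d}"
  obtain a b where J: "?J = {a..b}"
    using Inter_funpow_image_interval[OF cont self] by blast
  obtain \<delta> where \<delta>: "\<delta> > 0" "{q-\<delta>..q+\<delta>} \<subseteq> {c..d}" "{q-\<delta>..q+\<delta>} \<subseteq> g ` {q-\<delta>..q+\<delta>}"
    using repelling_fixed_point_expanding_interval[OF cont q deriv repelling] .
  have "{q-\<delta>..q+\<delta>} \<subseteq> {a..b}"
    using subset_Inter_funpow_image[OF \<delta>(2,3)] J by simp
  then have aq: "a < q" and qb: "q < b" using \<delta>(1) by auto
  have "{a..b} \<subseteq> {c..d}"
    using J INT_lower[of 0 UNIV "\<lambda>j. (g ^^ j) ` {c..d}"] by simp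
  then have "continuous_on {a..b} g" "inj_on g {a..b}"
    using cont inj by (auto intro: continuous_on_subset inj_on_subset)
  moreover have "g ` {a..b} = {a..b}"
    using image_Inter_funpow_image[OF self inj] J by simp
  ultimately have "g (g a) = a" "g (g b) = b"
    using continuous_inj_onto_interval_endpoints_period_two[of a b g] aq qb by simp_all
  with J aq qb show ?thesis by (rule that)
qed

lemma admissible_domain_periodic_seq:
  assumes "xs \<noteq> []" "f0 ` {0..1} \<subseteq> {0..1}" "f1 ` {0..1} \<subseteq> {0..1}"
  shows "admissible_domain f0 f1 (periodic_seq xs) = (\<Inter>j. (word_map f0 f1 xs ^^ j) ` {0..1})"
proof -
  define B where "B k = back_comp f0 f1 (periodic_seq xs) k ` {0..1}" for k
  have "B (Suc k) \<subseteq> B k" for k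
    using assms(2,3) unfolding B_def by (auto simp: fmap_def image_comp intro!: image_mono)
  then have antimono: "B k' \<subseteq> B k" if "k \<le> k'" for k k'
    using lift_Suc_antimono_le[of B] that by blast
  have pow: "B (length xs * j) = (word_map f0 f1 xs ^^ j) ` {0..1}" for j
    by (simp add: B_def back_comp_periodic_seq_pow[OF assms(1)])
  have "(\<Inter>k\<in>{1..}. B k) = (\<Inter>j. B (length xs * j))"
  proof (intro equalityI INT_greatest)
    show "(\<Inter>k\<in>{1..}. B k) \<subseteq> B (length xs * j)" for j
      using antimono[of "length xs * j" "Suc (length xs * j)"] by fastforce
    show "(\<Inter>j. B (length xs * j)) \<subseteq> B k" if "k \<in> {1..}" for k
      using antimono[of k "length xs * k"] assms(1) by (fastforce simp: Suc_le_eq)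
  qed
  then show ?thesis
    by (simp add: admissible_domain_def B_def[symmetric] pow)
qed

lemma abs_diff_le_SUP_abs_deriv:
  fixes f f' :: "real \<Rightarrow> real"
  assumes "a < b" and deriv: "\<forall>x\<in>{a..b}. (f has_real_derivative f' x) (at x within {a..b})"
    and "continuous_on {a..b} f'"
  shows "\<bar>f b - f a\<bar> \<le> (SUP x\<in>{a..b}. \<bar>f' x\<bar>) * (b - a)"
proof -
  obtain x where x: "x \<in> {a<..<b}" "f b - f a = f' x * (b - a)"
    using mvt_simple[of a b f "\<lambda>x h. f' x * h"] assms(1) deriv
    by (auto simp: has_field_derivative_def)
  have "compact ((\<lambda>x. \<bar>f' x\<bar>) ` {a..b})"
    using assms(3) by (intro compact_continuous_image continuous_intros) auto
  then have "\<bar>f' x\<bar> \<le> (SUP x\<in>{a..b}. \<bar>f' x\<bar>)"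
    using x(1) by (intro cSUP_upper bounded_imp_bdd_above compact_imp_bounded) auto
  then show ?thesis
    using x assms(1) by (simp add: abs_mult mult_right_mono)
qed

lemma decreasing_image_atLeastLessThan:
  fixes f :: "real \<Rightarrow> real"
  assumes decr: "\<forall>x\<in>{0..1}. \<forall>y\<in>{0..1}. x < y \<longrightarrow> f y < f x" and "f 1 = 0" "f 0 < 1"
  shows "f ` {0..<1} \<subseteq> {0<..<1}"
proof -
  have "f t \<in> {0<..<1}" if "0 \<le> t" "t < 1" for t
  proof -
    have "f 1 < f t" using decr that by auto
    moreover have "f t \<le> f 0"
      using decr[rule_format, of 0 t] that by (cases "t = 0") auto
    ultimately show ?thesis using assms(2,3) by simp
  qed
  then show ?thesis by auto
qed

lemma word_map_endpoints_not_fixed: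
  assumes f0: "f0 0 = 0" "f0 1 = 1" "f0 ` {0<..<1} \<subseteq> {0<..<1}"
    and f1: "f1 1 = 0" "f1 ` {0..<1} \<subseteq> {0<..<1}"
    and w: "\<exists>i\<in>set w. i \<noteq> 0"
  shows "word_map f0 f1 w 0 \<noteq> 0" "word_map f0 f1 w 1 \<noteq> 1"
proof -
  \<comment> \<open>The first nonzero letter sends 0 into \<open>(0,1)\<close> and 1 to 0; both \<open>(0,1)\<close> and \<open>[0,1)\<close>
    are invariant under \<open>f0\<close> and \<open>f1\<close>.\<close>
  obtain u i v where w_split: "w = u @ i # v" "i \<noteq> 0" "\<forall>k\<in>set u. k = 0"
    using split_list_first_prop[OF w] by auto
  have u: "word_map f0 f1 u x = x" if "x = 0 \<or> x = 1" for x :: real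
    using w_split(3) that f0(1,2) by (induction u) (auto simp: word_map_Cons fmap_def)
  have "{0..<1::real} = insert 0 {0<..<1}" by auto
  then have f0_closed: "f0 ` {0..<1} \<subseteq> {0..<1}" using f0(1,3) by auto
  have f1_closed: "f1 ` {0<..<1} \<subseteq> {0<..<1}" "f1 ` {0..<1} \<subseteq> {0..<1}"
    using f1(2) by auto
  have g: "word_map f0 f1 w x = word_map f0 f1 v (f1 x)" if "x = 0 \<or> x = 1" for x :: real
    using u[OF that] w_split(1,2) by (simp add: word_map_append word_map_Cons fmap_def)
  have "f1 0 \<in> {0<..<1}" using f1(2) by (simp add: image_subset_iff)
  then have "word_map f0 f1 w 0 \<in> {0<..<1}"
    using word_map_closed[OF f0(3) f1_closed(1)] g by simp
  moreover have "word_map f0 f1 w 1 \<in> {0..<1}"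
    using word_map_closed[OF f0_closed f1_closed(2)] g f1(1) by simp
  ultimately show "word_map f0 f1 w 0 \<noteq> 0" "word_map f0 f1 w 1 \<noteq> 1" by auto
qed

theorem lemma3p25:
  fixes f0 f1 f0' f1' :: "real \<Rightarrow> real"
    and \<beta> lam a0 b0 a1 b1 \<alpha> \<gamma> \<gamma>' \<alpha>bar :: real and N :: nat
    and xs :: "nat list" and q :: real
  assumes
    \<comment> \<open>C^1 injective self-maps of [0,1]\<close>
    f0_maps: "f0 ` {0..1} \<subseteq> {0..1}" and f0_inj: "inj_on f0 {0..1}"
    and f0_deriv: "\<forall>x\<in>{0..1}. (f0 has_real_derivative f0' x) (at x within {0..1})"
    and f0'_cont: "continuous_on {0..1} f0'"
    and f1_maps: "f1 ` {0..1} \<subseteq> {0..1}" and f1_inj: "inj_on f1 {0..1}"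
    and f1_deriv: "\<forall>x\<in>{0..1}. (f1 has_real_derivative f1' x) (at x within {0..1})"
    and f1'_cont: "continuous_on {0..1} f1'"
    \<comment> \<open>(F0.i)\<close>
    and f0_incr: "strict_mono_on {0..1} f0"
    and f0_fix: "{x\<in>{0..1}. f0 x = x} = {0, 1}"
    and beta: "f0' 0 = \<beta>" "\<beta> > 1"
    and lambda: "f0' 1 = lam" "0 < lam" "lam < 1"
    and f0'_bounds: "\<forall>x\<in>{0..1}. lam \<le> f0' x \<and> f0' x \<le> \<beta>"
    \<comment> \<open>(F0.ii)\<close>
    and I0: "0 < a0" "b0 < 1" "b0 = f0 a0"
    and I1: "b1 = f0 a1"
    and alpha: "\<alpha> > 1" and N: "N \<ge> 1"
    and f0N_I0: "(f0 ^^ N) ` {a0..b0} = {a1..b1}"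
    and f0N_deriv: "\<forall>x\<in>{a0..b0}. \<exists>D. ((f0 ^^ N) has_real_derivative D) (at x) \<and> lam * D > \<alpha>"
    and f0_expanding: "\<forall>x\<in>{0..b0}. f0' x > 1"
    and f0_contracting: "\<forall>x\<in>{a1..1}. f0' x < 1"
    \<comment> \<open>(F1.i)\<close>
    and f1_decr: "\<forall>x\<in>{0..1}. \<forall>y\<in>{0..1}. x < y \<longrightarrow> f1 y < f1 x"
    and gamma': "\<gamma>' = (INF x\<in>{0..1}. \<bar>f1' x\<bar>)"
    and gamma: "\<gamma> = (SUP x\<in>{0..1}. \<bar>f1' x\<bar>)" "\<gamma>' \<le> \<gamma>" "\<gamma> < 1"
    \<comment> \<open>(F1.ii)\<close>
    and alphabar: "\<alpha>bar > 1 / \<alpha>" "\<forall>x\<in>{f1 (f1 a1)..a1}. \<bar>f1' x\<bar> \<ge> \<alpha>bar"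
    \<comment> \<open>(F01)\<close>
    and F01: "f1 1 = 0" "f1 ` {a1..1} \<subseteq> {0..<a0}"
      "\<forall>y\<in>{0..1}. f0 (f0 y) = b0 \<longrightarrow> {0..<y} \<subseteq> f1 ` {0..1}"
    \<comment> \<open>the periodic sequence (xs)^Z, different from 0^Z\<close>
    and xs: "xs \<noteq> []" "set xs \<subseteq> {0, 1}" "1 \<in> set xs"
    \<comment> \<open>q is a repelling fixed point of g = f_[xs]\<close>
    and q: "q \<in> {0..1}" "word_map f0 f1 xs q = q"
    and q_rep: "\<exists>D. (word_map f0 f1 xs has_real_derivative D) (at q within {0..1}) \<and> \<bar>D\<bar> > 1"
  shows "(\<exists>a b. a < b \<and> admissible_domain f0 f1 (periodic_seq xs) = {a..b}) \<and>
         (\<exists>p p'. p \<in> admissible_domain f0 f1 (periodic_seq xs) \<and>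
                 p' \<in> admissible_domain f0 f1 (periodic_seq xs) \<and> p < q \<and> q < p' \<and>
                 word_map f0 f1 xs (word_map f0 f1 xs p) = p \<and>
                 word_map f0 f1 xs (word_map f0 f1 xs p') = p')"
proof -
  let ?g = "word_map f0 f1 xs"
  have f0_cont: "continuous_on {0..1} f0" and f1_cont: "continuous_on {0..1} f1"
    using f0_deriv f1_deriv by (auto intro: DERIV_continuous_on)
  have f0_ends: "f0 0 = 0" "f0 1 = 1" using f0_fix by (auto simp: set_eq_iff)
  have f0_open: "f0 ` {0<..<1} \<subseteq> {0<..<1}"
    using strict_mono_onD[OF f0_incr, of 0] strict_mono_onD[OF f0_incr, of _ 1] f0_ends by auto
  have "\<bar>f1 1 - f1 0\<bar> \<le> \<gamma>"
    using abs_diff_le_SUP_abs_deriv[of 0 1 f1 f1'] f1_deriv f1'_cont gamma(1) by simp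
  then have "f1 0 < 1" using F01(1) gamma(3) by simp
  then have f1_open: "f1 ` {0..<1} \<subseteq> {0<..<1}"
    by (rule decreasing_image_atLeastLessThan[OF f1_decr F01(1)])
  have "\<exists>i\<in>set xs. i \<noteq> 0" using xs(3) by auto
  then have "?g 0 \<noteq> 0" "?g 1 \<noteq> 1"
    using word_map_endpoints_not_fixed[OF f0_ends f0_open F01(1) f1_open] by simp_all
  with q have q_interior: "0 < q" "q < 1" by (metis atLeastAtMost_iff less_eq_real_def)+
  have g_cont: "continuous_on {0..1} ?g" and g_self: "?g ` {0..1} \<subseteq> {0..1}"
    and g_inj: "inj_on ?g {0..1}"
    using word_map_self_map[OF f0_cont f0_maps f0_inj f1_cont f1_maps f1_inj] by simp_all
  obtain D where "(?g has_real_derivative D) (at q within {0..1})" "\<bar>D\<bar> > 1"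
    using q_rep by blast
  then obtain a b where "(\<Inter>j. (?g ^^ j) ` {0..1}) = {a..b}" "a < q" "q < b"
    "?g (?g a) = a" "?g (?g b) = b"
    using Inter_funpow_image_repelling_fixed_point[OF g_cont g_self g_inj q_interior q(2)] by blast
  moreover have "admissible_domain f0 f1 (periodic_seq xs) = (\<Inter>j. (?g ^^ j) ` {0..1})"
    using admissible_domain_periodic_seq[OF xs(1) f0_maps f1_maps] .
  ultimately show ?thesis
    by (intro conjI exI[of _ a] exI[of _ b]) auto
qed

end
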